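(* Let $F:\mathbb T^d\to\mathbb R^d$ and $u_0:\mathbb T^d\to[0,1]$ be $C^\infty$, and let $u$ be the solution of $\partial_tu=\Delta u-2\nabla\cdot(u(1-u)F)$ with $u(0,\cdot)=u_0$. Assume there exists $\varepsilon_0>0$ such that $\varepsilon_0\le u_0(x)\le1-\varepsilon_0$ for all $x\in\mathbb T^d$. Then for any $T>0$ there exists $\varepsilon_1>0$, depending only on $T$, $F$ and $\varepsilon_0$, such that $\varepsilon_1\le u(t,x)\le1-\varepsilon_1$ for all $x\in\mathbb T^d$ and $t\in[0,T]$.
   Context: $\mathbb T^d=\mathbb R^d/\mathbb Z^d$. *)

theory Defs
  imports "HOL-Analysis.Analysis"
begin

text \<open>The torus T^d = R^d / Z^d is modelled by Z^d-periodic functions on real^'n,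
  where the finite type 'n indexes the d coordinates.\<close>

definition torus_periodic :: "(real^'n \<Rightarrow> 'b) \<Rightarrow> bool" where
  "torus_periodic f \<longleftrightarrow> (\<forall>x i. f (x + axis i 1) = f x)"

definition partial :: "'n \<Rightarrow> (real^'n \<Rightarrow> 'b::real_normed_vector) \<Rightarrow> real^'n \<Rightarrow> 'b" where
  "partial i f x = vector_derivative (\<lambda>s. f (x + s *\<^sub>R axis i 1)) (at 0)"

definition has_partial :: "'n \<Rightarrow> (real^'n \<Rightarrow> 'b::real_normed_vector) \<Rightarrow> real^'n \<Rightarrow> bool" where
  "has_partial i f x \<longleftrightarrow> (\<lambda>s. f (x + s *\<^sub>R axis i 1)) differentiable (at 0)"

fun iter_partial :: "'n list \<Rightarrow> (real^'n \<Rightarrow> 'b::real_normed_vector) \<Rightarrow> real^'n \<Rightarrow> 'b" where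
  "iter_partial [] f = f"
| "iter_partial (i # is) f = partial i (iter_partial is f)"

definition smooth :: "(real^'n \<Rightarrow> 'b::real_normed_vector) \<Rightarrow> bool" where
  "smooth f \<longleftrightarrow> (\<forall>is. continuous_on UNIV (iter_partial is f) \<and>
                        (\<forall>i x. has_partial i (iter_partial is f) x))"

definition classical_solution ::
  "(real^'n \<Rightarrow> real^'n) \<Rightarrow> (real^'n \<Rightarrow> real) \<Rightarrow> (real \<Rightarrow> real^'n \<Rightarrow> real) \<Rightarrow> bool" where
  "classical_solution F u0 u \<longleftrightarrow>
     continuous_on ({0..} \<times> UNIV) (\<lambda>(t,x). u t x)
   \<and> (\<forall>x. u 0 x = u0 x)
   \<and> (\<forall>t\<ge>0. torus_periodic (u t))
   \<and> (\<forall>t>0. \<forall>x. (\<lambda>s. u s x) differentiable (at t))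
   \<and> (\<forall>t>0. \<forall>x i j. has_partial i (u t) x \<and> has_partial j (partial i (u t)) x)
   \<and> continuous_on ({0<..} \<times> UNIV) (\<lambda>(t,x). vector_derivative (\<lambda>s. u s x) (at t))
   \<and> (\<forall>i. continuous_on ({0<..} \<times> UNIV) (\<lambda>(t,x). partial i (u t) x))
   \<and> (\<forall>i j. continuous_on ({0<..} \<times> UNIV) (\<lambda>(t,x). partial j (partial i (u t)) x))
   \<and> (\<forall>t>0. \<forall>x. vector_derivative (\<lambda>s. u s x) (at t) =
          (\<Sum>i\<in>UNIV. partial i (partial i (u t)) x)
          - 2 * (\<Sum>i\<in>UNIV. partial i (\<lambda>y. u t y * (1 - u t y) * F y $ i) x))"

end

theory Submission
  imports Defs
begin

(* At a spatial minimum of u(t,.) the gradient vanishes and the Laplacian is nonnegative, so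
  there the equation reduces to u_t >= -2 u (1 - u) div F >= -2 K u, where K bounds |div F| on
  the compact torus.  A first-touching-time argument against the barrier
  (eps0 / 2) exp (-(2 K + 1) t) keeps u above it; the same argument for 1 - u at spatial maxima
  gives the upper bound. *)

lemma nonneg_second_derivative_at_minimum:
  fixes g g' :: "real \<Rightarrow> real"
  assumes g: "\<And>s. (g has_real_derivative g' s) (at s)"
    and g': "(g' has_real_derivative c) (at a)"
    and minimum: "\<And>s. g a \<le> g s"
  shows "0 \<le> c"
proof (rule ccontr)
  assume "\<not> 0 \<le> c"
  have "g' a = 0"
    using DERIV_local_min[OF g, of 1] minimum by simp
  with DERIV_neg_dec_right[OF g'] \<open>\<not> 0 \<le> c\<close> obtain d where
    "d > 0" and neg: "\<And>h. 0 < h \<Longrightarrow> h < d \<Longrightarrow> g' (a + h) < 0"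
    by force
  have "g (a + d/2) < g a"
  proof (rule DERIV_neg_imp_decreasing_open[of a "a + d/2" g])
    show "continuous_on {a..a + d/2} g"
      using g by (meson DERIV_isCont continuous_at_imp_continuous_on)
    show "\<exists>y. (g has_real_derivative y) (at s) \<and> y < 0" if "a < s" "s < a + d/2" for s
      using g neg[of "s - a"] that by force
  qed (use \<open>d > 0\<close> in auto)
  with minimum[of "a + d/2"] show False
    by simp
qed

lemma nonpos_second_derivative_at_maximum:
  fixes g g' :: "real \<Rightarrow> real"
  assumes "\<And>s. (g has_real_derivative g' s) (at s)"
    and "(g' has_real_derivative c) (at a)"
    and "\<And>s. g s \<le> g a"
  shows "c \<le> 0"
  using nonneg_second_derivative_at_minimum[of "\<lambda>s. - g s" "\<lambda>s. - g' s" "- c" a]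
    assms DERIV_minus by fastforce

lemma has_partial_has_vector_derivative:
  assumes "has_partial i f x"
  shows "((\<lambda>s. f (x + s *\<^sub>R axis i 1)) has_vector_derivative partial i f x) (at 0)"
  using assms unfolding has_partial_def partial_def by (rule vector_derivative_works[THEN iffD1])

lemma has_partial_has_field_derivative:
  fixes f :: "real^'n \<Rightarrow> real"
  assumes "has_partial i f x"
  shows "((\<lambda>s. f (x + s *\<^sub>R axis i 1)) has_field_derivative partial i f x) (at 0)"
  using has_partial_has_vector_derivative[OF assms]
  by (simp add: has_real_derivative_iff_has_vector_derivative)

lemma has_partial_has_field_derivative_at:
  fixes f :: "real^'n \<Rightarrow> real"
  assumes "has_partial i f (x + s *\<^sub>R axis i 1)"
  shows "((\<lambda>r. f (x + r *\<^sub>R axis i 1)) has_field_derivative partial i f (x + s *\<^sub>R axis i 1)) (at s)"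
proof -
  have "((\<lambda>r. f (x + (r + s) *\<^sub>R axis i 1)) has_field_derivative
      partial i f (x + s *\<^sub>R axis i 1)) (at 0)"
    using has_partial_has_field_derivative[OF assms] by (simp add: algebra_simps)
  then show ?thesis
    using DERIV_shift[of "\<lambda>r. f (x + r *\<^sub>R axis i 1)" _ 0 s] by simp
qed

lemma partial_eq_0_at_minimum:
  fixes f :: "real^'n \<Rightarrow> real"
  assumes "has_partial i f x" "\<forall>y. f x \<le> f y"
  shows "partial i f x = 0"
  using DERIV_local_min[OF has_partial_has_field_derivative[OF assms(1)], of 1] assms(2) by simp

lemma partial_eq_0_at_maximum:
  fixes f :: "real^'n \<Rightarrow> real"
  assumes "has_partial i f x" "\<forall>y. f y \<le> f x"
  shows "partial i f x = 0"
  using DERIV_local_max[OF has_partial_has_field_derivative[OF assms(1)], of 1] assms(2) by simp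

lemma nonneg_second_partial_at_minimum:
  fixes f :: "real^'n \<Rightarrow> real"
  assumes "\<forall>y. has_partial i f y" "has_partial i (partial i f) x" "\<forall>y. f x \<le> f y"
  shows "0 \<le> partial i (partial i f) x"
  using nonneg_second_derivative_at_minimum[of "\<lambda>r. f (x + r *\<^sub>R axis i 1)"
      "\<lambda>r. partial i f (x + r *\<^sub>R axis i 1)" _ 0]
    assms has_partial_has_field_derivative_at has_partial_has_field_derivative by fastforce

lemma nonpos_second_partial_at_maximum:
  fixes f :: "real^'n \<Rightarrow> real"
  assumes "\<forall>y. has_partial i f y" "has_partial i (partial i f) x" "\<forall>y. f y \<le> f x"
  shows "partial i (partial i f) x \<le> 0"
  using nonpos_second_derivative_at_maximum[of "\<lambda>r. f (x + r *\<^sub>R axis i 1)"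
      "\<lambda>r. partial i f (x + r *\<^sub>R axis i 1)" _ 0]
    assms has_partial_has_field_derivative_at has_partial_has_field_derivative by fastforce

lemma has_partial_component:
  fixes F :: "real^'n \<Rightarrow> real^'m"
  assumes "has_partial i F x"
  shows "has_partial i (\<lambda>y. F y $ j) x \<and> partial i (\<lambda>y. F y $ j) x = partial i F x $ j"
proof -
  have "((\<lambda>s. F (x + s *\<^sub>R axis i 1) $ j) has_vector_derivative partial i F x $ j) (at 0)"
    using bounded_linear.has_vector_derivative[OF bounded_linear_vec_nth
        has_partial_has_vector_derivative[OF assms]] .
  then show ?thesis
    unfolding has_partial_def partial_def using vector_derivative_at differentiableI_vector by blast
qed

lemma partial_mult_logistic_at_critical:
  fixes f g :: "real^'n \<Rightarrow> real"
  assumes "has_partial i f x" "partial i f x = 0" "has_partial i g x"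
  shows "partial i (\<lambda>y. f y * (1 - f y) * g y) x = f x * (1 - f x) * partial i g x"
proof -
  have "((\<lambda>s. f (x + s *\<^sub>R axis i 1) * (1 - f (x + s *\<^sub>R axis i 1)) * g (x + s *\<^sub>R axis i 1))
      has_field_derivative f x * (1 - f x) * partial i g x) (at 0)"
    using assms(1,3)[THEN has_partial_has_field_derivative] assms(2)
    by (auto intro!: derivative_eq_intros)
  then show ?thesis
    unfolding partial_def has_real_derivative_iff_has_vector_derivative by (rule vector_derivative_at)
qed

lemma torus_periodic_shift_int:
  assumes "torus_periodic f"
  shows "f (x + of_int k *\<^sub>R axis i 1) = f x"
proof (induction k arbitrary: x rule: int_induct[where k = 0])
  case (step1 k)
  have "x + of_int (k + 1) *\<^sub>R axis i 1 = (x + of_int k *\<^sub>R axis i 1) + axis i 1"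
    by (simp add: algebra_simps)
  with step1 assms show ?case
    unfolding torus_periodic_def by metis
next
  case (step2 k)
  have "x + of_int k *\<^sub>R axis i 1 = (x + of_int (k - 1) *\<^sub>R axis i 1) + axis i 1"
    by (simp add: algebra_simps)
  with step2 assms show ?case
    unfolding torus_periodic_def by metis
qed simp

lemma torus_periodic_shift_lattice:
  assumes "torus_periodic f" "finite A"
  shows "f (x + (\<Sum>j\<in>A. of_int (k j) *\<^sub>R axis j 1)) = f x"
  using assms(2)
proof (induction A)
  case (insert j A)
  then show ?case
    using torus_periodic_shift_int[OF assms(1), of "x + (\<Sum>j\<in>A. of_int (k j) *\<^sub>R axis j 1)"]
    by (simp add: algebra_simps)
qed simp

lemma torus_periodic_value_in_unit_cube:
  assumes "torus_periodic f"
  obtains y where "y \<in> cbox 0 (\<chi> i. 1)" "f y = f x"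
proof
  define y where "y = (\<chi> j. frac (x $ j))"
  have "x = y + (\<Sum>j\<in>UNIV. of_int \<lfloor>x $ j\<rfloor> *\<^sub>R axis j 1)"
    by (simp add: y_def vec_eq_iff frac_def axis_def if_distrib cong: if_cong)
  then show "f y = f x"
    using torus_periodic_shift_lattice[OF assms finite] by metis
  show "y \<in> cbox 0 (\<chi> i. 1)"
    by (simp add: y_def mem_box_cart frac_lt_1 less_imp_le)
qed

lemma torus_periodic_continuous_bounded:
  fixes f :: "real^'n \<Rightarrow> 'b::real_normed_vector"
  assumes "torus_periodic f" "continuous_on UNIV f"
  shows "bounded (range f)"
proof -
  have "range f = f ` cbox 0 (\<chi> i. 1)"
    using torus_periodic_value_in_unit_cube[OF assms(1)] by (auto simp: image_iff) metis
  then show ?thesis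
    using compact_continuous_image[OF continuous_on_subset[OF assms(2)]]
    by (metis compact_cbox compact_imp_bounded subset_UNIV)
qed

lemma torus_periodic_partial:
  fixes f :: "real^'n \<Rightarrow> 'b::real_normed_vector"
  assumes "torus_periodic f"
  shows "torus_periodic (partial i f)"
  unfolding torus_periodic_def
proof (intro allI)
  fix x :: "real^'n" and j
  have "f (x + axis j 1 + s *\<^sub>R axis i 1) = f (x + s *\<^sub>R axis i 1)" for s :: real
    using assms unfolding torus_periodic_def by (metis add.assoc add.commute)
  then show "partial i f (x + axis j 1) = partial i f x"
    unfolding partial_def by simp
qed

definition divergence :: "(real^'n \<Rightarrow> real^'n) \<Rightarrow> real^'n \<Rightarrow> real" where
  "divergence F x = (\<Sum>i\<in>UNIV. partial i F x $ i)"

lemma smooth_has_partial: "smooth f \<Longrightarrow> has_partial i f x"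
  unfolding smooth_def by (metis iter_partial.simps(1))

lemma smooth_continuous_partial: "smooth f \<Longrightarrow> continuous_on UNIV (partial i f)"
  unfolding smooth_def by (metis iter_partial.simps)

lemma divergence_bounded:
  fixes F :: "real^'n \<Rightarrow> real^'n"
  assumes "smooth F" "torus_periodic F"
  obtains K where "K \<ge> 0" "\<And>x. \<bar>divergence F x\<bar> \<le> K"
proof -
  have "continuous_on UNIV (divergence F)"
    unfolding divergence_def[abs_def]
    by (intro continuous_on_sum continuous_on_component smooth_continuous_partial[OF assms(1)])
  moreover have "torus_periodic (divergence F)"
    using torus_periodic_partial[OF assms(2)] by (simp add: torus_periodic_def divergence_def)
  ultimately have "bounded (range (divergence F))"
    by (rule torus_periodic_continuous_bounded[rotated])
  then show ?thesis
    using that by (metis bounded_pos less_imp_le real_norm_def rangeI)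
qed

lemma first_touching_time:
  fixes w :: "real \<Rightarrow> real^'n \<Rightarrow> real" and \<phi> :: "real \<Rightarrow> real"
  assumes cont: "continuous_on ({0..} \<times> UNIV) (\<lambda>(t,x). w t x)"
    and per: "\<forall>t\<ge>0. torus_periodic (w t)"
    and cont_\<phi>: "continuous_on {0..} \<phi>"
    and init: "\<And>x. \<phi> 0 < w 0 x"
    and "0 \<le> t0" and below: "w t0 x0 < \<phi> t0"
  obtains ts xs where "0 < ts" "w ts xs = \<phi> ts" "\<And>y. \<phi> ts \<le> w ts y"
    "\<And>s y. 0 \<le> s \<Longrightarrow> s < ts \<Longrightarrow> \<phi> s < w s y"
proof -
  define C where "C = cbox (0::real^'n) (\<chi> i. 1)"
  define g where "g = (\<lambda>p. w (fst p) (snd p) - \<phi> (fst p))"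
  define P where "P = ({0..t0} \<times> C) \<inter> g -` {..0}"
  have in_P: "(s, y') \<in> P" if "0 \<le> s" "s \<le> t0" "w s y \<le> \<phi> s" "w s y' = w s y" "y' \<in> C"
    for s y y' using that by (simp add: P_def g_def)
  have "continuous_on ({0..t0} \<times> C) (\<lambda>p. w (fst p) (snd p))"
    by (rule continuous_on_subset[OF cont[unfolded case_prod_beta']]) auto
  moreover have "continuous_on ({0..t0} \<times> C) (\<lambda>p. \<phi> (fst p))"
    by (rule continuous_on_compose2[OF cont_\<phi> continuous_on_fst[OF continuous_on_id]]) auto
  ultimately have "continuous_on ({0..t0} \<times> C) g"
    unfolding g_def by (rule continuous_on_diff)
  then have "closed P"
    unfolding P_def by (rule continuous_closed_preimage) (auto simp: C_def intro!: closed_Times)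
  then have "compact P"
    using compact_Int_closed[of "{0..t0} \<times> C" P] unfolding C_def P_def
    by (metis compact_Icc compact_Times compact_cbox inf.absorb2 inf_le1)
  moreover from per \<open>0 \<le> t0\<close> have "torus_periodic (w t0)" by simp
  then obtain x1 where "x1 \<in> C" "w t0 x1 = w t0 x0"
    unfolding C_def by (rule torus_periodic_value_in_unit_cube)
  then have "(t0, x1) \<in> P"
    using in_P[of t0 x0 x1] \<open>0 \<le> t0\<close> below by simp
  ultimately obtain p where "p \<in> P" and first: "\<And>q. q \<in> P \<Longrightarrow> fst p \<le> fst q"
    using continuous_attains_inf[of P fst] continuous_on_fst[OF continuous_on_id] by blast
  obtain ts xs where p: "p = (ts, xs)"
    by (cases p)
  have ts: "0 \<le> ts" "ts \<le> t0" and le: "w ts xs \<le> \<phi> ts"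
    using \<open>p \<in> P\<close> by (auto simp: p P_def g_def)
  have "ts \<noteq> 0"
    using le init[of xs] by auto
  with ts have "0 < ts" by simp
  have earlier: "\<phi> s < w s y" if "0 \<le> s" "s < ts" for s y
  proof (rule ccontr)
    assume "\<not> \<phi> s < w s y"
    from per that(1) have "torus_periodic (w s)" by simp
    then obtain y' where "y' \<in> C" "w s y' = w s y"
      unfolding C_def by (rule torus_periodic_value_in_unit_cube)
    with \<open>\<not> \<phi> s < w s y\<close> that ts have "(s, y') \<in> P"
      by (intro in_P) auto
    with first have "ts \<le> s"
      unfolding p by fastforce
    with that(2) show False by simp
  qed
  have cont_w: "continuous_on {0..} (\<lambda>s. w s y)" for y
    using continuous_on_compose2[OF cont, of "{0..}" "\<lambda>s. (s, y)"] by (force intro: continuous_intros)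
  have above: "\<phi> ts \<le> w ts y" for y
  proof (rule ccontr)
    assume "\<not> \<phi> ts \<le> w ts y"
    moreover have "continuous_on {0..ts} (\<lambda>s. w s y - \<phi> s)"
      by (intro continuous_on_diff continuous_on_subset[OF cont_w] continuous_on_subset[OF cont_\<phi>]) auto
    ultimately obtain s where "0 \<le> s" "s \<le> ts" "w s y - \<phi> s = 0"
      using IVT2'[of "\<lambda>s. w s y - \<phi> s" ts 0 0] init[of y] ts by force
    then show False
      using earlier[of s y] \<open>\<not> \<phi> ts \<le> w ts y\<close> by (cases "s = ts") auto
  qed
  show ?thesis
    using that[OF \<open>0 < ts\<close> _ above earlier] le above[of xs] by simp
qed

lemma exponential_lower_barrier:
  fixes w :: "real \<Rightarrow> real^'n \<Rightarrow> real"
  assumes cont: "continuous_on ({0..} \<times> UNIV) (\<lambda>(t,x). w t x)"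
    and per: "\<forall>t\<ge>0. torus_periodic (w t)"
    and "0 < \<delta>" "\<delta> < 1" "0 \<le> K"
    and init: "\<And>x. \<delta> < w 0 x"
    and growth: "\<And>t x. 0 < t \<Longrightarrow> \<forall>y. w t x \<le> w t y \<Longrightarrow> 0 < w t x \<Longrightarrow> w t x < 1 \<Longrightarrow>
      \<exists>D. ((\<lambda>s. w s x) has_real_derivative D) (at t) \<and> - K * w t x \<le> D"
    and "0 \<le> t"
  shows "\<delta> * exp (- (K + 1) * t) \<le> w t x"
proof (rule ccontr)
  \<comment> \<open>The rate K + 1 instead of K makes the contact strict: at the first touching point
    (w - \<phi>)' \<ge> \<phi> > 0, so w < \<phi> slightly earlier.\<close>
  define \<phi> where "\<phi> t = \<delta> * exp (- (K + 1) * t)" for t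
  assume "\<not> \<delta> * exp (- (K + 1) * t) \<le> w t x"
  then have "w t x < \<phi> t"
    by (simp add: \<phi>_def)
  moreover have "continuous_on {0..} \<phi>"
    unfolding \<phi>_def by (intro continuous_intros)
  ultimately obtain ts xs where "0 < ts" and touch: "w ts xs = \<phi> ts" and minimum: "\<forall>y. w ts xs \<le> w ts y"
    and earlier: "\<And>s. 0 \<le> s \<Longrightarrow> s < ts \<Longrightarrow> \<phi> s < w s xs"
    using first_touching_time[OF cont per _ _ \<open>0 \<le> t\<close>] init by (metis \<phi>_def exp_zero mult_zero_right mult_1_right)
  have "exp (- (K + 1) * ts) \<le> 1"
    using \<open>0 \<le> K\<close> \<open>0 < ts\<close> by (simp add: mult_nonpos_nonneg)
  then have "\<phi> ts \<le> \<delta>"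
    unfolding \<phi>_def using \<open>0 < \<delta>\<close> by (intro mult_left_le) auto
  then have "\<phi> ts < 1"
    using \<open>\<delta> < 1\<close> by linarith
  have "0 < \<phi> ts"
    using \<open>0 < \<delta>\<close> by (simp add: \<phi>_def)
  with growth[OF \<open>0 < ts\<close> minimum] touch \<open>\<phi> ts < 1\<close> obtain D where
    D: "((\<lambda>s. w s xs) has_real_derivative D) (at ts)" "- K * \<phi> ts \<le> D"
    by auto
  have "(\<phi> has_real_derivative - (K + 1) * \<phi> ts) (at ts)"
    unfolding \<phi>_def by (auto intro!: derivative_eq_intros)
  from DERIV_diff[OF D(1) this]
  have "((\<lambda>s. w s xs - \<phi> s) has_real_derivative D + (K + 1) * \<phi> ts) (at ts)"
    by (simp add: algebra_simps)
  moreover have "0 < D + (K + 1) * \<phi> ts"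
    using D(2) \<open>0 < \<phi> ts\<close> by (simp add: algebra_simps)
  ultimately obtain e where "0 < e" and
    dec: "\<forall>h>0. h < e \<longrightarrow> w (ts - h) xs - \<phi> (ts - h) < w ts xs - \<phi> ts"
    using DERIV_pos_inc_left by blast
  define h where "h = min (e / 2) ts"
  have "0 < h" "h < e" "h \<le> ts"
    using \<open>0 < e\<close> \<open>0 < ts\<close> by (auto simp: h_def)
  then show False
    using dec[rule_format, of h] earlier[of "ts - h"] touch by simp
qed

lemma classical_solution_has_partials:
  assumes "classical_solution F u0 u" "0 < t"
  shows "has_partial i (u t) x" "has_partial j (partial i (u t)) x"
  using assms unfolding classical_solution_def by blast+

lemma classical_solution_derivative_at_critical_point:
  assumes sol: "classical_solution F u0 u" and "smooth F" "0 < t"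
    and critical: "\<And>i. partial i (u t) x = 0"
  shows "((\<lambda>s. u s x) has_real_derivative
      (\<Sum>i\<in>UNIV. partial i (partial i (u t)) x) - 2 * (u t x * (1 - u t x) * divergence F x)) (at t)"
proof -
  from sol \<open>0 < t\<close> have "(\<lambda>s. u s x) differentiable (at t)"
    and eqn: "vector_derivative (\<lambda>s. u s x) (at t) =
      (\<Sum>i\<in>UNIV. partial i (partial i (u t)) x)
      - 2 * (\<Sum>i\<in>UNIV. partial i (\<lambda>y. u t y * (1 - u t y) * F y $ i) x)"
    unfolding classical_solution_def by blast+
  then have "((\<lambda>s. u s x) has_real_derivative
      (\<Sum>i\<in>UNIV. partial i (partial i (u t)) x)
      - 2 * (\<Sum>i\<in>UNIV. partial i (\<lambda>y. u t y * (1 - u t y) * F y $ i) x)) (at t)"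
    by (simp add: vector_derivative_works has_real_derivative_iff_has_vector_derivative)
  moreover have "partial i (\<lambda>y. u t y * (1 - u t y) * F y $ i) x
      = u t x * (1 - u t x) * partial i F x $ i" for i
    using partial_mult_logistic_at_critical[OF classical_solution_has_partials(1)[OF sol \<open>0 < t\<close>]
        critical] has_partial_component[OF smooth_has_partial[OF \<open>smooth F\<close>]]
    by simp
  ultimately show ?thesis
    by (simp add: divergence_def sum_distrib_left)
qed

lemma classical_solution_growth_at_minimum:
  assumes sol: "classical_solution F u0 u" and "smooth F" "0 \<le> K"
    and div_bound: "\<And>x. \<bar>divergence F x\<bar> \<le> K"
    and "0 < t" and minimum: "\<forall>y. u t x \<le> u t y" and "0 < u t x" "u t x < 1"
  shows "\<exists>D. ((\<lambda>s. u s x) has_real_derivative D) (at t) \<and> - (2 * K) * u t x \<le> D"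
proof -
  note partials = classical_solution_has_partials[OF sol \<open>0 < t\<close>]
  have "0 \<le> (\<Sum>i\<in>UNIV. partial i (partial i (u t)) x)"
    by (intro sum_nonneg nonneg_second_partial_at_minimum) (use partials minimum in auto)
  moreover have "divergence F x * (u t x * (1 - u t x)) \<le> K * (u t x * (1 - u t x))"
    using div_bound[of x] \<open>0 < u t x\<close> \<open>u t x < 1\<close> by (intro mult_right_mono) auto
  moreover have "K * (u t x * (1 - u t x)) \<le> K * u t x"
    using \<open>0 \<le> K\<close> \<open>0 < u t x\<close> \<open>u t x < 1\<close> by (intro mult_left_mono mult_right_le_one_le) auto
  ultimately have "- (2 * K) * u t x \<le>
      (\<Sum>i\<in>UNIV. partial i (partial i (u t)) x) - 2 * (u t x * (1 - u t x) * divergence F x)"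
    by (simp add: algebra_simps)
  moreover have "\<And>i. partial i (u t) x = 0"
    using partial_eq_0_at_minimum partials minimum by blast
  ultimately show ?thesis
    using classical_solution_derivative_at_critical_point[OF sol \<open>smooth F\<close> \<open>0 < t\<close>] by blast
qed

lemma classical_solution_growth_at_maximum:
  assumes sol: "classical_solution F u0 u" and "smooth F" "0 \<le> K"
    and div_bound: "\<And>x. \<bar>divergence F x\<bar> \<le> K"
    and "0 < t" and maximum: "\<forall>y. u t y \<le> u t x" and "0 < u t x" "u t x < 1"
  shows "\<exists>D. ((\<lambda>s. 1 - u s x) has_real_derivative D) (at t) \<and> - (2 * K) * (1 - u t x) \<le> D"
proof -
  note partials = classical_solution_has_partials[OF sol \<open>0 < t\<close>]
  have "(\<Sum>i\<in>UNIV. partial i (partial i (u t)) x) \<le> 0"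
    by (intro sum_nonpos nonpos_second_partial_at_maximum) (use partials maximum in auto)
  moreover have "- K * (u t x * (1 - u t x)) \<le> divergence F x * (u t x * (1 - u t x))"
    using div_bound[of x] \<open>0 < u t x\<close> \<open>u t x < 1\<close> by (intro mult_right_mono) auto
  moreover have "K * (u t x * (1 - u t x)) \<le> K * (1 - u t x)"
    using \<open>0 \<le> K\<close> \<open>0 < u t x\<close> \<open>u t x < 1\<close> by (intro mult_left_mono mult_right_le_one_le) auto
  ultimately have "- (2 * K) * (1 - u t x) \<le>
      0 - ((\<Sum>i\<in>UNIV. partial i (partial i (u t)) x) - 2 * (u t x * (1 - u t x) * divergence F x))"
    by (simp add: algebra_simps)
  moreover have "\<And>i. partial i (u t) x = 0"
    using partial_eq_0_at_maximum partials maximum by blast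
  ultimately show ?thesis
    using DERIV_diff[OF DERIV_const classical_solution_derivative_at_critical_point[OF sol \<open>smooth F\<close> \<open>0 < t\<close>]]
    by blast
qed

lemma classical_solution_exponential_bounds:
  assumes sol: "classical_solution F u0 u" and "smooth F" "0 \<le> K"
    and div_bound: "\<And>x. \<bar>divergence F x\<bar> \<le> K"
    and "0 < \<delta>" and init: "\<And>x. \<delta> < u0 x \<and> u0 x < 1 - \<delta>"
    and "0 \<le> t"
  shows "\<delta> * exp (- (2 * K + 1) * t) \<le> u t x \<and> u t x \<le> 1 - \<delta> * exp (- (2 * K + 1) * t)"
proof -
  from sol have cont: "continuous_on ({0..} \<times> UNIV) (\<lambda>(t,x). u t x)"
    and per: "\<forall>t\<ge>0. torus_periodic (u t)" and "\<And>x. u 0 x = u0 x"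
    unfolding classical_solution_def by blast+
  with init have init_u: "\<And>x. \<delta> < u 0 x \<and> u 0 x < 1 - \<delta>"
    by simp
  have "\<delta> < 1"
    using init_u[of 0] by linarith
  have "\<delta> * exp (- (2 * K + 1) * t) \<le> u t x"
  proof (rule exponential_lower_barrier[OF cont per \<open>0 < \<delta>\<close> \<open>\<delta> < 1\<close> _ _ _ \<open>0 \<le> t\<close>])
    show "\<exists>D. ((\<lambda>s. u s x) has_real_derivative D) (at t) \<and> - (2 * K) * u t x \<le> D"
      if "0 < t" "\<forall>y. u t x \<le> u t y" "0 < u t x" "u t x < 1" for t x
      by (rule classical_solution_growth_at_minimum[OF sol \<open>smooth F\<close> \<open>0 \<le> K\<close> div_bound that])
  qed (use \<open>0 \<le> K\<close> init_u in auto)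
  moreover have "\<delta> * exp (- (2 * K + 1) * t) \<le> 1 - u t x"
  proof (rule exponential_lower_barrier[where w = "\<lambda>t x. 1 - u t x", OF _ _ \<open>0 < \<delta>\<close> \<open>\<delta> < 1\<close> _ _ _ \<open>0 \<le> t\<close>])
    show "continuous_on ({0..} \<times> UNIV) (\<lambda>(t,x). 1 - u t x)"
      using continuous_on_diff[OF continuous_on_const cont] by (simp add: case_prod_beta')
    show "\<forall>t\<ge>0. torus_periodic (\<lambda>x. 1 - u t x)"
      using per by (simp add: torus_periodic_def)
    show "\<exists>D. ((\<lambda>s. 1 - u s x) has_real_derivative D) (at t) \<and> - (2 * K) * (1 - u t x) \<le> D"
      if "0 < t" "\<forall>y. 1 - u t x \<le> 1 - u t y" "0 < 1 - u t x" "1 - u t x < 1" for t x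
      using that by (intro classical_solution_growth_at_maximum[OF sol \<open>smooth F\<close> \<open>0 \<le> K\<close> div_bound]) auto
    show "\<delta> < 1 - u 0 x" for x
      using init_u[of x] by linarith
  qed (use \<open>0 \<le> K\<close> in auto)
  ultimately show ?thesis
    by simp
qed

theorem lemmaB3:
  fixes F :: "real^'n \<Rightarrow> real^'n" and \<epsilon>0 T :: real
  assumes "smooth F" and "torus_periodic F"
    and "\<epsilon>0 > 0" and "T > 0"
  shows "\<exists>\<epsilon>1 > 0. \<forall>(u0 :: real^'n \<Rightarrow> real) (u :: real \<Rightarrow> real^'n \<Rightarrow> real).
           smooth u0 \<and> torus_periodic u0 \<and> (\<forall>x. u0 x \<in> {0..1})
           \<and> (\<forall>x. \<epsilon>0 \<le> u0 x \<and> u0 x \<le> 1 - \<epsilon>0)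
           \<and> classical_solution F u0 u
           \<longrightarrow> (\<forall>t\<in>{0..T}. \<forall>x. \<epsilon>1 \<le> u t x \<and> u t x \<le> 1 - \<epsilon>1)"
proof -
  obtain K where "0 \<le> K" and div_bound: "\<And>x. \<bar>divergence F x\<bar> \<le> K"
    using divergence_bounded[OF assms(1,2)] by blast
  define \<delta> where "\<delta> = \<epsilon>0 / 2"
  define \<epsilon>1 where "\<epsilon>1 = \<delta> * exp (- (2 * K + 1) * T)"
  have "0 < \<delta>"
    using assms(3) by (simp add: \<delta>_def)
  have decay: "\<epsilon>1 \<le> \<delta> * exp (- (2 * K + 1) * t)" if "t \<le> T" for t
    unfolding \<epsilon>1_def using that \<open>0 \<le> K\<close> \<open>0 < \<delta>\<close> by (simp add: mult_left_mono)
  show ?thesis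
  proof (intro exI[of _ \<epsilon>1] conjI allI impI ballI)
    show "0 < \<epsilon>1"
      using \<open>0 < \<delta>\<close> by (simp add: \<epsilon>1_def)
    fix u0 u t x
    assume "smooth u0 \<and> torus_periodic u0 \<and> (\<forall>x. u0 x \<in> {0..1})
      \<and> (\<forall>x. \<epsilon>0 \<le> u0 x \<and> u0 x \<le> 1 - \<epsilon>0) \<and> classical_solution F u0 u" and "t \<in> {0..T}"
    then have sol: "classical_solution F u0 u" and bounds: "\<forall>x. \<epsilon>0 \<le> u0 x \<and> u0 x \<le> 1 - \<epsilon>0"
      and "0 \<le> t" "t \<le> T"
      by auto
    have "\<delta> < u0 y \<and> u0 y < 1 - \<delta>" for y
      using bounds[rule_format, of y] assms(3) unfolding \<delta>_def by linarith
    from classical_solution_exponential_bounds[OF sol assms(1) \<open>0 \<le> K\<close> div_bound \<open>0 < \<delta>\<close> this \<open>0 \<le> t\<close>, where x = x]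
    show "\<epsilon>1 \<le> u t x" "u t x \<le> 1 - \<epsilon>1"
      using decay[OF \<open>t \<le> T\<close>] by linarith+
  qed
qed

end
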